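(* Let $m$ be odd and let $Q_{4m}=\langle a,b\mid a^{2m}=e,\ a^m=b^2,\ b^{-1}ab=a^{-1}\rangle$ be the dicyclic group of order $4m$; set $n=2m$. Then there is no inverse-closed subset $S\subseteq Q_{4m}\setminus\{e\}$ such that $\mathrm{Cay}(Q_{4m},S)$ is a non-trivial bipartite distance-regular graph with diameter $3$, i.e., a distance-regular graph with intersection array $\{k,k-1,k-\mu;1,\mu,k\}$ with $k<n-1$.
   Context: For a finite group $G$ with identity $e$ and a subset $S\subseteq G\setminus\{e\}$ with $S=S^{-1}$, the Cayley graph $\mathrm{Cay}(G,S)$ has vertex set $G$, two vertices $a,b$ being adjacent iff $ab^{-1}\in S$. A connected graph of diameter $d$ is distance-regular with intersection array $\{b_0,\dots,b_{d-1};c_1,\dots,c_d\}$ if for all vertices $x,y$ at distance $i$, the number of neighbours of $x$ at distance $i+1$ (resp. $i-1$) from $y$ is $b_i$ (resp. $c_i$). *)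

theory Defs
  imports "HOL-Algebra.Algebra"
begin

fun walk_len :: "('v \<Rightarrow> 'v \<Rightarrow> bool) \<Rightarrow> nat \<Rightarrow> 'v \<Rightarrow> 'v \<Rightarrow> bool" where
  "walk_len adj 0 x y = (x = y)"
| "walk_len adj (Suc n) x y = (\<exists>z. adj x z \<and> walk_len adj n z y)"

definition gconnected :: "'v set \<Rightarrow> ('v \<Rightarrow> 'v \<Rightarrow> bool) \<Rightarrow> bool" where
  "gconnected V adj \<longleftrightarrow> (\<forall>x\<in>V. \<forall>y\<in>V. \<exists>n. walk_len adj n x y)"

definition gdist :: "('v \<Rightarrow> 'v \<Rightarrow> bool) \<Rightarrow> 'v \<Rightarrow> 'v \<Rightarrow> nat" where
  "gdist adj x y = (LEAST n. walk_len adj n x y)"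

definition gdiameter :: "'v set \<Rightarrow> ('v \<Rightarrow> 'v \<Rightarrow> bool) \<Rightarrow> nat \<Rightarrow> bool" where
  "gdiameter V adj d \<longleftrightarrow> (\<forall>x\<in>V. \<forall>y\<in>V. gdist adj x y \<le> d) \<and>
      (\<exists>x\<in>V. \<exists>y\<in>V. gdist adj x y = d)"

text \<open>Distance-regular of diameter d with intersection array
  {b 0, ..., b (d-1); c 1, ..., c d}.\<close>
definition distance_regular ::
  "'v set \<Rightarrow> ('v \<Rightarrow> 'v \<Rightarrow> bool) \<Rightarrow> nat \<Rightarrow> (nat \<Rightarrow> nat) \<Rightarrow> (nat \<Rightarrow> nat) \<Rightarrow> bool" where
  "distance_regular V adj d b c \<longleftrightarrow>
     gconnected V adj \<and> gdiameter V adj d \<and>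
     (\<forall>x\<in>V. \<forall>y\<in>V. \<forall>i.
        gdist adj x y = i \<longrightarrow>
        (i < d \<longrightarrow> card {z\<in>V. adj x z \<and> gdist adj z y = i + 1} = b i) \<and>
        (1 \<le> i \<and> i \<le> d \<longrightarrow> card {z\<in>V. adj x z \<and> gdist adj z y = i - 1} = c i))"

definition cayley_adj :: "('a, 'b) monoid_scheme \<Rightarrow> 'a set \<Rightarrow> 'a \<Rightarrow> 'a \<Rightarrow> bool" where
  "cayley_adj G S x y \<longleftrightarrow> x \<in> carrier G \<and> y \<in> carrier G \<and> x \<otimes>\<^bsub>G\<^esub> inv\<^bsub>G\<^esub> y \<in> S"

definition is_dicyclic :: "('a, 'b) monoid_scheme \<Rightarrow> nat \<Rightarrow> 'a \<Rightarrow> 'a \<Rightarrow> bool" where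
  "is_dicyclic G m a b \<longleftrightarrow> group G \<and> a \<in> carrier G \<and> b \<in> carrier G \<and>
     carrier G = generate G {a, b} \<and> card (carrier G) = 4 * m \<and>
     a [^]\<^bsub>G\<^esub> (2 * m) = \<one>\<^bsub>G\<^esub> \<and> a [^]\<^bsub>G\<^esub> m = b [^]\<^bsub>G\<^esub> (2::nat) \<and>
     inv\<^bsub>G\<^esub> b \<otimes>\<^bsub>G\<^esub> a \<otimes>\<^bsub>G\<^esub> b = inv\<^bsub>G\<^esub> a"

end

(* A distance-regular graph with intersection array {k, k-1, k-\<mu>; 1, \<mu>, k} is bipartite
   (b_i + c_i = k leaves no neighbour inside a distance layer), so all walks between two
   fixed vertices have the same parity; moreover \<mu> < k, since b_2 = k - \<mu> > 0 in diameter 3.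
   In Q_4m the central involution c = a^m = b^2 is a square, hence any walk from 1 to c has
   even length, and so has any walk from 1 to 1.  A connection set element a^i would give the
   walk 1, a^i, ..., a^(im) of odd length m ending in 1 or c; so S consists of elements a^i b,
   all squaring to c.  Then s^-1 = s c for s \<in> S, so the neighbourhood S of 1 is invariant
   under right translation by c, while c \<notin> S (else c = c^2 = 1): the vertex c at distance 2
   from 1 shares all k neighbours of 1, forcing \<mu> = k. *)
theory Submission
  imports Defs
begin

lemma walk_len_append:
  "walk_len adj n x y \<Longrightarrow> walk_len adj n' y z \<Longrightarrow> walk_len adj (n + n') x z"
  by (induction n arbitrary: x) auto

lemma gdist_le_walk_len: "walk_len adj n x y \<Longrightarrow> gdist adj x y \<le> n"
  unfolding gdist_def by (rule Least_le)

locale bipartite_drg3 =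
  fixes V :: "'v set" and adj :: "'v \<Rightarrow> 'v \<Rightarrow> bool" and k \<mu> :: nat
  assumes finite_V: "finite V"
    and adj_sym: "adj x y \<Longrightarrow> adj y x"
    and adj_irrefl: "\<not> adj x x"
    and adj_in_V: "adj x y \<Longrightarrow> x \<in> V"
    and drg: "distance_regular V adj 3 (\<lambda>i. if i = 0 then k else if i = 1 then k - 1 else k - \<mu>)
              (\<lambda>i. if i = 1 then 1 else if i = 2 then \<mu> else k)"
begin

lemma adj_in_V': "adj x y \<Longrightarrow> y \<in> V"
  using adj_in_V adj_sym by blast

lemma connected: "x \<in> V \<Longrightarrow> y \<in> V \<Longrightarrow> \<exists>n. walk_len adj n x y"
  using drg unfolding distance_regular_def gconnected_def by blast

lemma gdist_le_3: "x \<in> V \<Longrightarrow> y \<in> V \<Longrightarrow> gdist adj x y \<le> 3"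
  using drg unfolding distance_regular_def gdiameter_def by blast

lemma ex_gdist_eq_3: "\<exists>x\<in>V. \<exists>y\<in>V. gdist adj x y = 3"
  using drg unfolding distance_regular_def gdiameter_def by blast

lemma card_farther_neighbours:
  "x \<in> V \<Longrightarrow> y \<in> V \<Longrightarrow> gdist adj x y = i \<Longrightarrow> i < 3 \<Longrightarrow>
   card {z\<in>V. adj x z \<and> gdist adj z y = i + 1} = (if i = 0 then k else if i = 1 then k - 1 else k - \<mu>)"
  using drg unfolding distance_regular_def by blast

lemma card_closer_neighbours:
  "x \<in> V \<Longrightarrow> y \<in> V \<Longrightarrow> gdist adj x y = i \<Longrightarrow> 1 \<le> i \<Longrightarrow> i \<le> 3 \<Longrightarrow>
   card {z\<in>V. adj x z \<and> gdist adj z y = i - 1} = (if i = 1 then 1 else if i = 2 then \<mu> else k)"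
  using drg unfolding distance_regular_def by blast

lemma walk_len_gdist: "x \<in> V \<Longrightarrow> y \<in> V \<Longrightarrow> walk_len adj (gdist adj x y) x y"
  unfolding gdist_def using connected by (metis LeastI)

lemma gdist_eq_0_iff: "x \<in> V \<Longrightarrow> y \<in> V \<Longrightarrow> gdist adj x y = 0 \<longleftrightarrow> x = y"
  using walk_len_gdist[of x y] gdist_le_walk_len[of adj 0 x x] by auto

lemma gdist_eq_1_iff: "x \<in> V \<Longrightarrow> y \<in> V \<Longrightarrow> gdist adj x y = 1 \<longleftrightarrow> adj x y"
proof
  assume "x \<in> V" "y \<in> V" "gdist adj x y = 1"
  then show "adj x y" using walk_len_gdist[of x y] by auto
next
  assume "x \<in> V" "y \<in> V" "adj x y"
  moreover have "gdist adj x y \<le> 1"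
    using gdist_le_walk_len[of adj 1 x y] \<open>adj x y\<close> by auto
  moreover have "x \<noteq> y" using adj_irrefl \<open>adj x y\<close> by auto
  ultimately show "gdist adj x y = 1" using gdist_eq_0_iff by fastforce
qed

lemma gdist_le_Suc_gdist: "adj x z \<Longrightarrow> y \<in> V \<Longrightarrow> gdist adj x y \<le> gdist adj z y + 1"
  using walk_len_gdist[of z y] adj_in_V'[of x z] gdist_le_walk_len[of adj "Suc (gdist adj z y)" x y]
  by auto

lemma card_neighbours:
  assumes x: "x \<in> V"
  shows "card {z\<in>V. adj x z} = k"
proof -
  have "{z\<in>V. adj x z \<and> gdist adj z x = 0 + 1} = {z\<in>V. adj x z}"
    using gdist_eq_1_iff x adj_sym by auto
  then show ?thesis
    using card_farther_neighbours[OF x x, of 0] gdist_eq_0_iff[OF x x] by simp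
qed

lemma card_farther_plus_closer:
  assumes x: "x \<in> V" and y: "y \<in> V" and i: "gdist adj x y = i" "1 \<le> i"
  shows "card {z\<in>V. adj x z \<and> gdist adj z y = i + 1}
       + card {z\<in>V. adj x z \<and> gdist adj z y = i - 1} = k"
proof -
  let ?B = "{z\<in>V. adj x z \<and> gdist adj z y = i + 1}"
  let ?C = "{z\<in>V. adj x z \<and> gdist adj z y = i - 1}"
  have "finite {z\<in>V. adj x z}" using finite_V by simp
  then have "card ?C \<le> card {z\<in>V. adj x z}" by (rule card_mono) blast
  then have C_le: "card ?C \<le> k" using card_neighbours[OF x] by simp
  have "i \<le> 3" using gdist_le_3[OF x y] i by simp
  then consider "i = 1" | "i = 2" | "i = 3" using i(2) by linarith
  then show ?thesis
  proof cases
    case 3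
    then have "?B = {}" using gdist_le_3[OF _ y] by fastforce
    moreover have "card ?C = k" using card_closer_neighbours[OF x y i] 3 by simp
    ultimately show ?thesis by (metis card.empty add_0)
  qed (use card_farther_neighbours[OF x y i(1)] card_closer_neighbours[OF x y i] C_le in simp_all)
qed

lemma gdist_adj_neq:
  assumes xy: "adj x y" and e: "e \<in> V"
  shows "gdist adj x e \<noteq> gdist adj y e"
proof
  assume eq: "gdist adj x e = gdist adj y e"
  have x: "x \<in> V" and y: "y \<in> V" using xy adj_in_V adj_in_V' by blast+
  let ?i = "gdist adj x e"
  let ?B = "{z\<in>V. adj x z \<and> gdist adj z e = ?i + 1}"
  let ?C = "{z\<in>V. adj x z \<and> gdist adj z e = ?i - 1}"
  have "?i \<noteq> 0" using gdist_eq_0_iff[OF x e] gdist_eq_0_iff[OF y e] eq xy adj_irrefl by metis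
  have sub: "insert y (?B \<union> ?C) \<subseteq> {z\<in>V. adj x z}" using y xy by blast
  have fin: "finite {z\<in>V. adj x z}" using finite_V by simp
  have "finite ?B" "finite ?C" using finite_V by simp_all
  then have "card (?B \<union> ?C) = card ?B + card ?C" by (rule card_Un_disjoint) auto
  moreover have "y \<notin> ?B \<union> ?C" using eq \<open>?i \<noteq> 0\<close> by auto
  ultimately have "card (insert y (?B \<union> ?C)) = card ?B + card ?C + 1"
    using finite_subset[OF sub fin] by simp
  also have "card ?B + card ?C = k"
    using card_farther_plus_closer[OF x e refl] \<open>?i \<noteq> 0\<close> by simp
  finally have "card (insert y (?B \<union> ?C)) = k + 1" .
  moreover have "card (insert y (?B \<union> ?C)) \<le> k"
    using card_mono[OF fin sub] card_neighbours[OF x] by simp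
  ultimately show False by simp
qed

lemma walk_len_parity:
  "walk_len adj n x y \<Longrightarrow> x \<in> V \<Longrightarrow> e \<in> V \<Longrightarrow> even (gdist adj x e + n + gdist adj y e)"
proof (induction n arbitrary: x)
  case 0
  then show ?case by simp
next
  case (Suc n)
  then obtain z where z: "adj x z" "walk_len adj n z y" by auto
  then have IH: "even (gdist adj z e + n + gdist adj y e)" using Suc adj_in_V' by auto
  have "gdist adj x e = gdist adj z e + 1 \<or> gdist adj z e = gdist adj x e + 1"
    using gdist_le_Suc_gdist[OF z(1) Suc.prems(3)] gdist_le_Suc_gdist[OF adj_sym[OF z(1)] Suc.prems(3)]
      gdist_adj_neq[OF z(1) Suc.prems(3)]
    by linarith
  then show ?case using IH by presburger
qed

lemma walk_len_same_parity:
  "walk_len adj n x y \<Longrightarrow> walk_len adj n' x y \<Longrightarrow> x \<in> V \<Longrightarrow> even (n + n')"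
  using walk_len_parity[of n x y x] walk_len_parity[of n' x y x] by auto

lemma mu_less_k: "\<mu> < k"
proof -
  obtain x y where x: "x \<in> V" and y: "y \<in> V" and xy: "gdist adj x y = 3"
    using ex_gdist_eq_3 by blast
  then have "walk_len adj 3 x y" using walk_len_gdist[OF x y] by simp
  then obtain z where z: "adj x z" "walk_len adj 2 z y" by (auto simp: numeral_eq_Suc)
  let ?N = "{w\<in>V. adj z w \<and> gdist adj w y = 2 + 1}"
  have "gdist adj z y = 2"
    using gdist_le_walk_len[OF z(2)] gdist_le_Suc_gdist[OF z(1) y] xy by simp
  then have "card ?N = k - \<mu>"
    using card_farther_neighbours[OF adj_in_V'[OF z(1)] y] by simp
  moreover have "x \<in> ?N" using x xy z adj_sym by auto
  then have "card ?N \<noteq> 0" using finite_V by (auto simp: card_eq_0_iff)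
  ultimately show ?thesis by simp
qed

lemma no_vertex_dominating_neighbours:
  assumes e: "e \<in> V" and c: "c \<in> V" and "c \<noteq> e" and "\<not> adj e c"
    and dom: "\<And>z. adj e z \<Longrightarrow> adj z c"
  shows False
proof -
  obtain n where n: "walk_len adj n e c" using connected e c by blast
  then obtain z where "adj e z" using \<open>c \<noteq> e\<close> by (cases n) auto
  then have "walk_len adj 2 e c" using dom by (auto simp: numeral_eq_Suc)
  then have "gdist adj e c = 2"
    using gdist_le_walk_len gdist_eq_0_iff[OF e c] gdist_eq_1_iff[OF e c] assms(3,4)
    by (metis One_nat_def le_Suc_eq le_zero_eq numeral_2_eq_2)
  then have "card {z\<in>V. adj e z \<and> gdist adj z c = 2 - 1} = \<mu>"
    using card_closer_neighbours[OF e c] by simp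
  moreover have "{z\<in>V. adj e z \<and> gdist adj z c = 2 - 1} = {z\<in>V. adj e z}"
    using dom gdist_eq_1_iff c by auto
  ultimately show False using card_neighbours[OF e] mu_less_k by simp
qed

end

locale dicyclic_relations = group G for G (structure) +
  fixes a b :: 'a and m :: nat
  assumes a_closed: "a \<in> carrier G" and b_closed: "b \<in> carrier G"
    and conj_b_a: "inv b \<otimes> a \<otimes> b = inv a"
    and b_square: "b \<otimes> b = a [^] int m"
begin

lemma conj_b_a_int_pow: "inv b \<otimes> a [^] (i::int) \<otimes> b = a [^] (- i)"
proof -
  define h where "h = (\<lambda>x. inv b \<otimes> x \<otimes> b)"
  have cancel: "b \<otimes> (inv b \<otimes> x) = x" if "x \<in> carrier G" for x
    using b_closed that by (simp add: m_assoc[symmetric])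
  have "h \<in> hom G G"
    unfolding hom_def h_def using b_closed by (auto simp: m_assoc cancel)
  then have "h (a [^] i) = h a [^] i" using hom_int_pow a_closed is_group by metis
  then show ?thesis using conj_b_a h_def a_closed by (simp add: int_pow_inv int_pow_neg)
qed

lemma b_mult_a_int_pow: "b \<otimes> a [^] (i::int) = a [^] (- i) \<otimes> b"
proof -
  have "b \<otimes> (inv b \<otimes> a [^] (- i) \<otimes> b) = a [^] (- i) \<otimes> b"
    using a_closed b_closed by (simp add: m_assoc[symmetric])
  then show ?thesis using conj_b_a_int_pow[of "- i"] by simp
qed

lemma a_pow_b_mult_a_pow: "a [^] (i::int) \<otimes> b \<otimes> a [^] (j::int) = a [^] (i - j) \<otimes> b"
proof -
  have "a [^] (i - j) = a [^] i \<otimes> a [^] (- j)" using a_closed int_pow_mult[of a i "- j"] by simp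
  then show ?thesis using a_closed b_closed by (simp add: m_assoc b_mult_a_int_pow)
qed

lemma a_pow_b_mult_a_pow_b: "(a [^] (i::int) \<otimes> b) \<otimes> (a [^] (j::int) \<otimes> b) = a [^] (i - j + int m)"
proof -
  have "(a [^] i \<otimes> b) \<otimes> (a [^] j \<otimes> b) = (a [^] i \<otimes> b \<otimes> a [^] j) \<otimes> b"
    using a_closed b_closed by (simp add: m_assoc)
  also have "\<dots> = a [^] (i - j) \<otimes> (b \<otimes> b)"
    using a_closed b_closed by (simp add: a_pow_b_mult_a_pow m_assoc)
  also have "\<dots> = a [^] (i - j + int m)" using a_closed by (simp add: b_square int_pow_mult)
  finally show ?thesis .
qed

lemma inv_b: "inv b = a [^] (- int m) \<otimes> b"
proof (rule inv_equality)
  show "a [^] (- int m) \<otimes> b \<otimes> b = \<one>"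
    using a_closed b_closed by (simp add: m_assoc b_square int_pow_mult[symmetric])
qed (use a_closed b_closed in auto)

definition normal_forms :: "'a set" where
  "normal_forms = {x. \<exists>i::int. x = a [^] i} \<union> {x. \<exists>i::int. x = a [^] i \<otimes> b}"

lemma normal_forms_subset_carrier: "normal_forms \<subseteq> carrier G"
  unfolding normal_forms_def using a_closed b_closed by auto

lemma generate_subset_normal_forms: "generate G {a, b} \<subseteq> normal_forms"
proof
  fix x assume "x \<in> generate G {a, b}"
  then show "x \<in> normal_forms"
  proof (induction rule: generate.induct)
    case one
    then show ?case unfolding normal_forms_def by (auto intro: exI[of _ 0])
  next
    case (incl h)
    then show ?case unfolding normal_forms_def using a_closed b_closed
      by (auto intro: exI[of _ 1] exI[of _ 0])
  next
    case (inv h)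
    then show ?case unfolding normal_forms_def using a_closed b_closed inv_b
      by (auto intro: exI[of _ "- 1"] exI[of _ "- int m"] simp: int_pow_neg)
  next
    case (eng h1 h2)
    from eng.IH show ?case unfolding normal_forms_def
    proof (elim UnE CollectE exE)
      fix i j :: int assume "h1 = a [^] i" "h2 = a [^] j"
      then show "h1 \<otimes> h2 \<in> {x. \<exists>i::int. x = a [^] i} \<union> {x. \<exists>i::int. x = a [^] i \<otimes> b}"
        using a_closed by (auto simp: int_pow_mult[symmetric])
    next
      fix i j :: int assume "h1 = a [^] i" "h2 = a [^] j \<otimes> b"
      then show "h1 \<otimes> h2 \<in> {x. \<exists>i::int. x = a [^] i} \<union> {x. \<exists>i::int. x = a [^] i \<otimes> b}"
        using a_closed b_closed by (auto simp: int_pow_mult[symmetric] m_assoc[symmetric])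
    next
      fix i j :: int assume "h1 = a [^] i \<otimes> b" "h2 = a [^] j"
      then show "h1 \<otimes> h2 \<in> {x. \<exists>i::int. x = a [^] i} \<union> {x. \<exists>i::int. x = a [^] i \<otimes> b}"
        using a_pow_b_mult_a_pow by auto
    next
      fix i j :: int assume "h1 = a [^] i \<otimes> b" "h2 = a [^] j \<otimes> b"
      then show "h1 \<otimes> h2 \<in> {x. \<exists>i::int. x = a [^] i} \<union> {x. \<exists>i::int. x = a [^] i \<otimes> b}"
        using a_pow_b_mult_a_pow_b by auto
    qed
  qed
qed

lemma int_pow_a_mod:
  assumes "a [^] (int n) = \<one>"
  shows "a [^] (i::int) = a [^] (i mod int n)"
proof -
  have "a [^] i = a [^] (int n * (i div int n) + i mod int n)" by simp
  also have "\<dots> = (a [^] (int n)) [^] (i div int n) \<otimes> a [^] (i mod int n)"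
    using a_closed int_pow_mult[of a "int n * (i div int n)" "i mod int n"]
      int_pow_pow[of a "int n" "i div int n"] by simp
  finally show ?thesis using assms a_closed by simp
qed

lemma card_normal_forms_le:
  assumes "a [^] (int m) = \<one>" and "m > 0"
  shows "card normal_forms \<le> 2 * m"
proof -
  let ?A = "(\<lambda>j. a [^] j) ` {0..<int m}" and ?B = "(\<lambda>j. a [^] j \<otimes> b) ` {0..<int m}"
  have "normal_forms \<subseteq> ?A \<union> ?B"
  proof
    fix x assume "x \<in> normal_forms"
    have r: "i mod int m \<in> {0..<int m}" for i using assms(2) by simp
    from \<open>x \<in> normal_forms\<close> show "x \<in> ?A \<union> ?B"
      unfolding normal_forms_def
    proof (elim UnE CollectE exE)
      fix i :: int assume "x = a [^] i"
      then have "x = a [^] (i mod int m)" using int_pow_a_mod[OF assms(1)] by simp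
      then show ?thesis using r[of i] by blast
    next
      fix i :: int assume "x = a [^] i \<otimes> b"
      then have "x = a [^] (i mod int m) \<otimes> b" using int_pow_a_mod[OF assms(1)] by simp
      then show ?thesis using r[of i] by blast
    qed
  qed
  then have "card normal_forms \<le> card (?A \<union> ?B)" by (intro card_mono) auto
  also have "\<dots> \<le> card ?A + card ?B" by (rule card_Un_le)
  also have "\<dots> \<le> m + m"
    by (intro add_mono) (metis card_atLeastLessThan_int card_image_le diff_zero
        finite_atLeastLessThan_int nat_int)+
  finally show ?thesis by simp
qed

lemma a_pow_mult_m_is_square:
  assumes "a [^] (2 * m) = \<one>"
  shows "\<exists>g\<in>carrier G. a [^] (i * int m) = g \<otimes> g"
proof (cases "even i")
  case True
  then obtain j where "i = 2 * j" by blast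
  then have "a [^] (i * int m) = a [^] (j * int m) \<otimes> a [^] (j * int m)"
    using a_closed by (simp add: int_pow_mult[symmetric] algebra_simps)
  then show ?thesis using a_closed by blast
next
  case False
  then obtain j where "i = 2 * j + 1" using oddE by blast
  then have "a [^] (i * int m) = (a [^] (2 * int m)) [^] j \<otimes> a [^] int m"
    using a_closed by (simp add: int_pow_pow int_pow_mult[symmetric] algebra_simps)
  also have "a [^] (2 * int m) = \<one>"
    using assms by (metis int_pow_int of_nat_mult of_nat_numeral)
  finally have "a [^] (i * int m) = b \<otimes> b" using a_closed by (simp add: b_square)
  then show ?thesis using b_closed by blast
qed

end

context group
begin

lemma cayley_adj_sym:
  assumes "\<forall>s\<in>S. inv s \<in> S" and "cayley_adj G S x y"
  shows "cayley_adj G S y x"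
proof -
  have xy: "x \<in> carrier G" "y \<in> carrier G" "x \<otimes> inv y \<in> S"
    using assms(2) unfolding cayley_adj_def by auto
  then have "y \<otimes> inv x = inv (x \<otimes> inv y)" by (simp add: inv_mult_group)
  then show ?thesis using assms(1) xy unfolding cayley_adj_def by auto
qed

lemma cayley_walk_pow:
  assumes "inv t \<in> S" and "t \<in> carrier G" and "x \<in> carrier G"
  shows "walk_len (cayley_adj G S) n x (t [^] n \<otimes> x)"
  using assms(3)
proof (induction n arbitrary: x)
  case 0
  then show ?case by simp
next
  case (Suc n)
  have "cayley_adj G S x (t \<otimes> x)"
    using assms Suc.prems unfolding cayley_adj_def by (simp add: inv_mult_group m_assoc[symmetric])
  moreover have "walk_len (cayley_adj G S) n (t \<otimes> x) (t [^] n \<otimes> (t \<otimes> x))"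
    using Suc assms(2) by simp
  moreover have "t [^] n \<otimes> (t \<otimes> x) = t [^] Suc n \<otimes> x"
    using assms Suc.prems by (simp add: m_assoc)
  ultimately show ?case by auto
qed

lemma cayley_walk_mult_right:
  assumes "walk_len (cayley_adj G S) n x y" and g: "g \<in> carrier G"
  shows "walk_len (cayley_adj G S) n (x \<otimes> g) (y \<otimes> g)"
  using assms(1)
proof (induction n arbitrary: x)
  case 0
  then show ?case by simp
next
  case (Suc n)
  then obtain z where z: "cayley_adj G S x z" "walk_len (cayley_adj G S) n z y" by auto
  have "g \<otimes> (inv g \<otimes> w) = w" if "w \<in> carrier G" for w
    using g that by (simp add: m_assoc[symmetric])
  then have "cayley_adj G S (x \<otimes> g) (z \<otimes> g)"
    using z(1) g unfolding cayley_adj_def by (simp add: inv_mult_group m_assoc)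
  then show ?case using Suc z by auto
qed

lemma bipartite_drg3_cayleyI:
  assumes "finite (carrier G)" and "S \<subseteq> carrier G - {\<one>}" and "\<forall>s\<in>S. inv s \<in> S"
    and "distance_regular (carrier G) (cayley_adj G S) 3
           (\<lambda>i. if i = 0 then k else if i = 1 then k - 1 else k - \<mu>)
           (\<lambda>i. if i = 1 then 1 else if i = 2 then \<mu> else k)"
  shows "bipartite_drg3 (carrier G) (cayley_adj G S) k \<mu>"
  using assms cayley_adj_sym[OF assms(3)] by unfold_locales (auto simp: cayley_adj_def)

end

locale cayley_bipartite_drg3 = group G + bipartite_drg3 "carrier G" "cayley_adj G S" k \<mu>
  for G :: "('a, 'b) monoid_scheme" (structure) and S k \<mu> +
  assumes S_subset: "S \<subseteq> carrier G" and S_inv: "\<forall>s\<in>S. inv s \<in> S"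
begin

lemma even_walk_to_square:
  assumes g: "g \<in> carrier G" and w: "walk_len (cayley_adj G S) n \<one> (g \<otimes> g)"
  shows "even n"
proof -
  obtain n' where w': "walk_len (cayley_adj G S) n' \<one> g" using connected g by blast
  then have "walk_len (cayley_adj G S) n' (\<one> \<otimes> g) (g \<otimes> g)"
    using cayley_walk_mult_right g by blast
  then have "walk_len (cayley_adj G S) (n' + n') \<one> (g \<otimes> g)"
    using walk_len_append[OF w'] g by simp
  then show ?thesis using walk_len_same_parity[OF w] by simp
qed

text \<open>Right translation by c\<inverse> maps the neighbours of 1 to neighbours of c.\<close>
lemma mem_S_if_right_translation_invariant:
  assumes c: "c \<in> carrier G" "c \<noteq> \<one>" and closed: "\<forall>s\<in>S. s \<otimes> inv c \<in> S"
  shows "c \<in> S"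
proof (rule ccontr)
  assume "c \<notin> S"
  then have "\<not> cayley_adj G S \<one> c" using S_inv c unfolding cayley_adj_def by force
  moreover have "cayley_adj G S z c" if "cayley_adj G S \<one> z" for z
  proof -
    have "z \<in> S" using that S_inv unfolding cayley_adj_def by force
    then show ?thesis using closed c S_subset unfolding cayley_adj_def by auto
  qed
  ultimately show False using no_vertex_dominating_neighbours[of \<one> c] c by auto
qed

end

locale dicyclic_cayley_drg3 = dicyclic_relations G a b m + cayley_bipartite_drg3 G S k \<mu>
  for G :: "('a, 'b) monoid_scheme" (structure) and a b m S k \<mu> +
  assumes odd_m: "odd m" and a_order: "a [^] (2 * m) = \<one>"
    and generated: "carrier G = generate G {a, b}" and card_carrier: "card (carrier G) = 4 * m"
begin

lemma square_of_mem_S: assumes s: "s \<in> S" shows "s \<otimes> s = a [^] int m"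
proof -
  have "s \<in> normal_forms" using s S_subset generated generate_subset_normal_forms by blast
  then show ?thesis unfolding normal_forms_def
  proof (elim UnE CollectE exE)
    fix i :: int assume si: "s = a [^] i"
    have "walk_len (cayley_adj G S) m \<one> (s [^] m)"
      using cayley_walk_pow[of s S \<one> m] S_inv s S_subset by auto
    moreover have "s [^] m = a [^] (i * int m)"
      using si a_closed by (simp add: int_pow_pow int_pow_int[symmetric])
    moreover obtain g where "g \<in> carrier G" "a [^] (i * int m) = g \<otimes> g"
      using a_pow_mult_m_is_square[OF a_order] by blast
    ultimately show ?thesis using even_walk_to_square odd_m by metis
  next
    fix i :: int assume "s = a [^] i \<otimes> b"
    then show ?thesis using a_pow_b_mult_a_pow_b[of i i] by simp
  qed
qed

lemma inconsistent: False
proof -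
  define c where "c = a [^] int m"
  have c_closed: "c \<in> carrier G" using a_closed c_def by simp
  have "c \<noteq> \<one>"
  proof
    assume "c = \<one>"
    then have "card normal_forms \<le> 2 * m" using card_normal_forms_le odd_m c_def by (simp add: odd_pos)
    moreover have "carrier G = normal_forms"
      using generated generate_subset_normal_forms normal_forms_subset_carrier by auto
    ultimately show False using card_carrier odd_m by (simp add: odd_pos)
  qed
  have "s \<otimes> inv c \<in> S" if s: "s \<in> S" for s
  proof -
    have s_closed: "s \<in> carrier G" using s S_subset by auto
    have "s \<otimes> (s \<otimes> inv c) = \<one>"
      using square_of_mem_S[OF s] s_closed c_closed by (simp add: c_def m_assoc[symmetric])
    then have "inv s = s \<otimes> inv c" using s_closed c_closed by (simp add: inv_comm inv_equality)
    then show ?thesis using S_inv s by metis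
  qed
  then have "c \<in> S" using mem_S_if_right_translation_invariant c_closed \<open>c \<noteq> \<one>\<close> by blast
  then have "c \<otimes> c = c" using square_of_mem_S c_def by simp
  then show False using c_closed \<open>c \<noteq> \<one>\<close> by (metis l_one one_closed right_cancel)
qed

end

theorem proposition5p3:
  fixes G :: "('a, 'b) monoid_scheme" and m :: nat and a b :: 'a
  assumes "odd m"
    and "is_dicyclic G m a b"
  shows "\<not> (\<exists>S k \<mu>. S \<subseteq> carrier G - {\<one>\<^bsub>G\<^esub>} \<and> (\<forall>s\<in>S. inv\<^bsub>G\<^esub> s \<in> S) \<and>
            k < 2 * m - 1 \<and>
            distance_regular (carrier G) (cayley_adj G S) 3
              (\<lambda>i. if i = 0 then k else if i = 1 then k - 1 else k - \<mu>)
              (\<lambda>i. if i = 1 then 1 else if i = 2 then \<mu> else k))"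
proof (intro notI, elim exE conjE)
  fix S k \<mu>
  assume S: "S \<subseteq> carrier G - {\<one>\<^bsub>G\<^esub>}" "\<forall>s\<in>S. inv\<^bsub>G\<^esub> s \<in> S"
    and drg: "distance_regular (carrier G) (cayley_adj G S) 3
              (\<lambda>i. if i = 0 then k else if i = 1 then k - 1 else k - \<mu>)
              (\<lambda>i. if i = 1 then 1 else if i = 2 then \<mu> else k)"
  interpret group G using assms(2) unfolding is_dicyclic_def by simp
  have "card (carrier G) = 4 * m" using assms(2) unfolding is_dicyclic_def by blast
  then have "finite (carrier G)" using assms(1) by (intro card_ge_0_finite) (simp add: odd_pos)
  then interpret bipartite_drg3 "carrier G" "cayley_adj G S" k \<mu>
    using bipartite_drg3_cayleyI S drg by blast
  interpret dicyclic_cayley_drg3 G a b m S k \<mu>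
    using assms S unfolding is_dicyclic_def
    by unfold_locales (auto simp: int_pow_int numeral_2_eq_2)
  show False by (rule inconsistent)
qed

end
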